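(* For every integer $N\ge16$ and $\rho\in[2/3,1)$ there is $C<\infty$ such that for every interval $I\subset\mathbb R$, $$\int_I\big|H_\flat(\mathbf 1_I\widehat{\dot\sigma})\big|^2\,d\widehat\omega\le C\,\widehat{\dot\sigma}(I),$$ where $H_\flat(\mathbf 1_I\widehat{\dot\sigma})(x)=\sum_{k,j:\dot z^k_j\in I}\widehat s^k_j K_\flat(x-\dot z^k_j)$, which converges absolutely for $x\in\mathsf E^{(N)}$.
   Context: Cantor intervals: fix an integer $N\ge16$ and $\rho\in[2/3,1)$. Set $I^0_1=[0,1]$. Each interval $I=[a,a+N^{-k}]$ of generation $k$ has two children of generation $k+1$: the left child $I_-=[a,a+N^{-k-1}]$ and the right child $I_+=[a+N^{-k}-N^{-k-1},a+N^{-k}]$. The $2^k$ intervals of generation $k$ are denoted $I^k_j$, $1\le j\le 2^k$, numbered left to right; $\mathcal D$ is the collection of all of them. $\dot z^k_j$ is the center of $I^k_j$. The Cantor set is $\mathsf E^{(N)}=\bigcap_{k}\bigcup_{j}I^k_j$. Redistributed Cantor measure: with $\eta=1/N$, $\widehat\omega$ is the unique Borel probability measure supported on $\mathsf E^{(N)}$ such that $\widehat\omega(I^1_1)=\widehat\omega(I^1_2)=\frac12$ and for every $I\in\mathcal D$ of generation $\ge1$: if $I$ is the left child of its parent then $\widehat\omega(I_-)=\frac{1+\eta}2\widehat\omega(I)$, $\widehat\omega(I_+)=\frac{1-\eta}2\widehat\omega(I)$; if $I$ is the right child of its parent then $\widehat\omega(I_-)=\frac{1-\eta}2\widehat\omega(I)$,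 $\widehat\omega(I_+)=\frac{1+\eta}2\widehat\omega(I)$. Weights: $\widehat s^k_j=N^{-2k}/\widehat\omega(I^k_j)$; $\widehat{\dot\sigma}=\sum_{k\ge0}\sum_{j=1}^{2^k}\widehat s^k_j\,\delta_{\dot z^k_j}$. Flattened kernel: $K_\flat$ is defined first on $[N^{-1/2},N^{1/2}]$ as a smooth nonincreasing function with values in $[N^{-1/2},N^{1/2}]$ such that $K_\flat(x)=1/x$ for $N^{-1/2}\le x\le(\rho N)^{-1/2}$ and for $(\rho N)^{1/2}\le x\le N^{1/2}$, and $K_\flat(x)=1$ for $(\rho^2N)^{-1/2}\le x\le(\rho^2N)^{1/2}$; then extended to $(0,\infty)$ by $K_\flat(x)=N^{-k}K_\flat(N^{-k}x)$ for $x\in[N^{k-1/2},N^{k+1/2}]$, $k\in\mathbb Z$, and to $\mathbb R\setminus\{0\}$ as an odd function. $H_\flat\mu(x)=\int K_\flat(x-y)\,d\mu(y)$. *)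

theory Defs
  imports "HOL-Analysis.Analysis" "HOL-Probability.Probability"
begin

text \<open>Cantor intervals. Indices j are 0-based: our index j (0 \<le> j < 2^k) corresponds
  to the paper's index j+1. The children of interval (k,j) are (k+1,2j) (left) and
  (k+1,2j+1) (right).\<close>

fun cantor_left :: "nat \<Rightarrow> nat \<Rightarrow> nat \<Rightarrow> real" where
  "cantor_left N 0 j = 0"
| "cantor_left N (Suc k) j = cantor_left N k (j div 2)
     + (if odd j then (real N) powr (- real k) - (real N) powr (- real (Suc k)) else 0)"

definition cantor_int :: "nat \<Rightarrow> nat \<Rightarrow> nat \<Rightarrow> real set" where
  "cantor_int N k j = {cantor_left N k j .. cantor_left N k j + (real N) powr (- real k)}"

definition cantor_center :: "nat \<Rightarrow> nat \<Rightarrow> nat \<Rightarrow> real" where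
  "cantor_center N k j = cantor_left N k j + (real N) powr (- real k) / 2"

definition cantor_set :: "nat \<Rightarrow> real set" where
  "cantor_set N = (\<Inter>k. \<Union>j\<in>{..<2^k}. cantor_int N k j)"

text \<open>Prescribed masses of the redistributed Cantor measure, eta = 1/N.
  For k \<ge> 1 the child (k+1,j) of parent (k, j div 2): the child is a left child iff j is
  even, the parent is a left child iff (j div 2) is even; the factor (1+eta)/2 goes to the
  child on the same side as the parent.\<close>

fun omega_mass :: "nat \<Rightarrow> nat \<Rightarrow> nat \<Rightarrow> real" where
  "omega_mass N 0 j = 1"
| "omega_mass N (Suc k) j = omega_mass N k (j div 2) *
     (if k = 0 then 1/2
      else if (even (j div 2) \<longleftrightarrow> even j) then (1 + 1 / real N) / 2 else (1 - 1 / real N) / 2)"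

definition redistributed_cantor_measure :: "nat \<Rightarrow> real measure \<Rightarrow> bool" where
  "redistributed_cantor_measure N M \<longleftrightarrow>
     sets M = sets borel \<and> prob_space M \<and>
     emeasure M (- cantor_set N) = 0 \<and>
     (\<forall>k j. j < 2^k \<longrightarrow> measure M (cantor_int N k j) = omega_mass N k j)"

definition weight_s :: "nat \<Rightarrow> real measure \<Rightarrow> nat \<Rightarrow> nat \<Rightarrow> real" where
  "weight_s N M k j = (real N) powr (- 2 * real k) / measure M (cantor_int N k j)"

definition sigma_dot :: "nat \<Rightarrow> real measure \<Rightarrow> real set \<Rightarrow> real" where
  "sigma_dot N M I = infsum (\<lambda>(k,j). weight_s N M k j) {(k,j). j < 2^k \<and> cantor_center N k j \<in> I}"

definition H_flat_I :: "nat \<Rightarrow> (real \<Rightarrow> real) \<Rightarrow> real measure \<Rightarrow> real set \<Rightarrow> real \<Rightarrow> real" where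
  "H_flat_I N K M I x = infsum (\<lambda>(k,j). weight_s N M k j * K (x - cantor_center N k j))
        {(k,j). j < 2^k \<and> cantor_center N k j \<in> I}"

text \<open>Flattened kernel: any function satisfying the paper's requirements.
  Smoothness on [a,b] is expressed by existence of all higher (one-sided at the endpoints)
  derivatives.\<close>
definition flat_kernel :: "nat \<Rightarrow> real \<Rightarrow> (real \<Rightarrow> real) \<Rightarrow> bool" where
  "flat_kernel N \<rho> K \<longleftrightarrow>
    (let a = (real N) powr (-1/2); b = (real N) powr (1/2) in
      (\<exists>D :: nat \<Rightarrow> real \<Rightarrow> real. (\<forall>x\<in>{a..b}. D 0 x = K x) \<and>
          (\<forall>n. \<forall>x\<in>{a..b}. (D n has_real_derivative D (Suc n) x) (at x within {a..b}))) \<and>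
      (\<forall>x y. a \<le> x \<longrightarrow> x \<le> y \<longrightarrow> y \<le> b \<longrightarrow> K y \<le> K x) \<and>
      (\<forall>x\<in>{a..b}. K x \<in> {a..b}) \<and>
      (\<forall>x. a \<le> x \<and> x \<le> (\<rho> * real N) powr (-1/2) \<longrightarrow> K x = 1 / x) \<and>
      (\<forall>x. (\<rho> * real N) powr (1/2) \<le> x \<and> x \<le> b \<longrightarrow> K x = 1 / x) \<and>
      (\<forall>x. (\<rho>^2 * real N) powr (-1/2) \<le> x \<and> x \<le> (\<rho>^2 * real N) powr (1/2) \<longrightarrow> K x = 1) \<and>
      (\<forall>k::int. \<forall>x. (real N) powr (real_of_int k - 1/2) \<le> x \<and> x \<le> (real N) powr (real_of_int k + 1/2)
           \<longrightarrow> K x = (real N) powr (- real_of_int k) * K ((real N) powr (- real_of_int k) * x)) \<and>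
      (\<forall>x. x \<noteq> 0 \<longrightarrow> K (- x) = - K x))"

end

theory Submission
  imports Defs
begin

text \<open>Only the size bound \<open>\<bar>K(y)\<bar> \<le> N/\<bar>y\<bar>\<close> of the kernel is used.
  Let \<open>J = I\<^sup>k\<^sub>j\<close> be the smallest Cantor interval containing \<open>I \<inter> E\<close>.
  If there is none, \<open>I \<inter> E\<close> lies in a nested sequence of Cantor intervals whose masses
  decay geometrically, hence is \<open>\<omega>\<close>-null. Otherwise \<open>I \<inter> E\<close> meets both children
  of \<open>J\<close>, so the center of \<open>J\<close> lies in \<open>I\<close>, and every other center in \<open>I\<close>
  belongs to an ancestor or a descendant of \<open>J\<close>. Points of \<open>E\<close> keep distance at least
  \<open>\<bar>I\<^sup>m\<^sub>i\<bar>/4\<close> from the centers of generation \<open>m\<close>, so on \<open>I \<inter> E\<close>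
  the function \<open>\<bar>H\<^sub>\<flat>\<bar>\<close> is at most \<open>4N\<close> times the sum of the ratios
  \<open>\<bar>I\<^sup>m\<^sub>i\<bar>/\<omega>(I\<^sup>m\<^sub>i)\<close> over these centers; the descendants
  contribute at most the ratio of \<open>J\<close> itself, because masses shrink by at least the factor
  \<open>(1 - 1/N)/2\<close> per generation while the number of intervals only doubles. Finally
  \<open>s\<^sup>m\<^sub>i = (\<bar>I\<^sup>m\<^sub>i\<bar>/\<omega>(I\<^sup>m\<^sub>i))\<^sup>2 \<omega>(I\<^sup>m\<^sub>i) \<le> \<sigma>(I)\<close>
  for each ancestor with center in \<open>I\<close>, while \<open>\<omega>(J)\<close> is smaller than the ancestor's mass
  by a factor \<open>((1 + 1/N)/2)\<^sup>k\<^sup>-\<^sup>m\<close>; so the square of the bound times \<open>\<omega>(J)\<close> is a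
  geometric series times \<open>\<sigma>(I)\<close>.\<close>

lemma sum_power_inj_le:
  fixes x :: real
  assumes "0 \<le> x" "x < 1" "finite A" "inj_on f A"
  shows "(\<Sum>a\<in>A. x ^ f a) \<le> 1 / (1 - x)"
proof -
  have "(\<Sum>a\<in>A. x ^ f a) = (\<Sum>d\<in>f ` A. x ^ d)"
    using assms(4) by (simp add: sum.reindex)
  also have "\<dots> \<le> (\<Sum>d. x ^ d)"
    using assms by (intro sum_le_suminf summable_geometric) auto
  also have "\<dots> = 1 / (1 - x)"
    using assms by (simp add: suminf_geometric)
  finally show ?thesis .
qed

lemma of_nat_powr_minus: "0 < N \<Longrightarrow> real N powr (- real k) = 1 / real N ^ k"
  by (simp add: powr_minus powr_realpow divide_inverse)

section \<open>Cantor intervals\<close>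

lemma cantor_left_Suc_eq:
  "0 < N \<Longrightarrow> cantor_left N (Suc k) j = cantor_left N k (j div 2)
     + (if odd j then 1 / real N ^ k - 1 / real N ^ Suc k else 0)"
  by (simp only: cantor_left.simps of_nat_powr_minus)

declare cantor_left.simps(2)[simp del]

lemma cantor_int_eq:
  "0 < N \<Longrightarrow> cantor_int N k j = {cantor_left N k j .. cantor_left N k j + 1 / real N ^ k}"
  by (simp add: cantor_int_def of_nat_powr_minus)

lemma cantor_center_eq:
  "0 < N \<Longrightarrow> cantor_center N k j = cantor_left N k j + 1 / real N ^ k / 2"
  by (simp add: cantor_center_def of_nat_powr_minus)

lemma cantor_left_even: "cantor_left N (Suc k) (2 * i) = cantor_left N k i"
  by (simp add: cantor_left.simps(2))

lemma cantor_left_odd: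
  "0 < N \<Longrightarrow> cantor_left N (Suc k) (Suc (2 * i)) = cantor_left N k i + (1 / real N ^ k - 1 / real N ^ Suc k)"
  by (simp add: cantor_left_Suc_eq del: power_Suc)

lemma cantor_left_mult_power: "cantor_left N (k + d) (i * 2^d) = cantor_left N k i"
proof (induction d)
  case (Suc d)
  have "cantor_left N (k + Suc d) (i * 2^Suc d) = cantor_left N (Suc (k + d)) (2 * (i * 2^d))"
    by (simp add: mult.commute mult.left_commute)
  then show ?case using Suc cantor_left_even by simp
qed simp

lemma cantor_left_mem_cantor_int: "0 < N \<Longrightarrow> cantor_left N k i \<in> cantor_int N k i"
  by (simp add: cantor_int_eq)

lemma cantor_int_Suc_subset:
  assumes "2 \<le> N"
  shows "cantor_int N (Suc k) j \<subseteq> cantor_int N k (j div 2)"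
proof -
  have "1 / real N ^ Suc k \<le> 1 / real N ^ k"
    using assms by (simp add: divide_simps)
  then show ?thesis
    using assms by (auto simp: cantor_int_eq cantor_left_Suc_eq)
qed

lemma cantor_int_nested:
  assumes "2 \<le> N" "k \<le> m"
  shows "cantor_int N m i \<subseteq> cantor_int N k (i div 2^(m - k))"
proof -
  have "cantor_int N (k + d) i \<subseteq> cantor_int N k (i div 2^d)" for d i
  proof (induction d arbitrary: i)
    case (Suc d)
    have "cantor_int N (k + Suc d) i \<subseteq> cantor_int N (k + d) (i div 2)"
      using cantor_int_Suc_subset[OF assms(1)] by simp
    also have "\<dots> \<subseteq> cantor_int N k (i div 2^Suc d)"
      using Suc.IH[of "i div 2"] by (simp add: div_mult2_eq)
    finally show ?case .
  qed simp
  then show ?thesis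
    using assms(2) by (metis le_add_diff_inverse)
qed

lemma cantor_left_separated:
  assumes "3 \<le> N" "j < 2^k" "p < 2^k" "j \<noteq> p"
  shows "2 / real N ^ k \<le> \<bar>cantor_left N k j - cantor_left N k p\<bar>"
  using assms(2-)
proof (induction k arbitrary: j p)
  case (Suc k)
  let ?e = "1 / real N ^ k" and ?f = "1 / real N ^ Suc k"
  have N0: "0 < N" using assms(1) by simp
  have gap: "2 * ?f \<le> ?e - ?f" "0 < ?f"
    using assms(1) by (simp_all add: field_simps)
  show ?case
  proof (cases "j div 2 = p div 2")
    case True
    then have "odd j \<noteq> odd p"
      using Suc.prems by (metis dvd_mult_div_cancel odd_two_times_div_two_succ)
    then show ?thesis
      using True gap by (auto simp: cantor_left_Suc_eq[OF N0] simp del: power_Suc)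
  next
    case False
    then have "2 * ?e \<le> \<bar>cantor_left N k (j div 2) - cantor_left N k (p div 2)\<bar>"
      using Suc.IH[of "j div 2" "p div 2"] Suc.prems by simp
    then show ?thesis
      using gap by (auto simp: cantor_left_Suc_eq[OF N0] abs_if split: if_splits simp del: power_Suc)
  qed
qed simp

lemma cantor_int_disjoint:
  assumes "3 \<le> N" "j < 2^k" "p < 2^k" "j \<noteq> p"
  shows "cantor_int N k j \<inter> cantor_int N k p = {}"
proof -
  define e where "e = 1 / real N ^ k"
  have "0 < e" "2 * e \<le> \<bar>cantor_left N k j - cantor_left N k p\<bar>"
    using assms(1) cantor_left_separated[OF assms] by (simp_all add: e_def)
  moreover have "cantor_int N k i = {cantor_left N k i .. cantor_left N k i + e}" for i
    using assms(1) by (simp add: cantor_int_eq e_def)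
  ultimately show ?thesis by (auto simp: abs_if split: if_splits)
qed

lemma mem_cantor_set_iff: "x \<in> cantor_set N \<longleftrightarrow> (\<forall>k. \<exists>i<2^k. x \<in> cantor_int N k i)"
  by (auto simp: cantor_set_def)

lemma cantor_left_mem_cantor_set:
  assumes "2 \<le> N" "i < 2^m"
  shows "cantor_left N m i \<in> cantor_set N"
  unfolding mem_cantor_set_iff
proof
  fix k
  show "\<exists>j<2^k. cantor_left N m i \<in> cantor_int N k j"
  proof (cases "m \<le> k")
    case True
    then obtain d where d: "k = m + d" using le_Suc_ex by blast
    then have "i * 2^d < 2^k" "cantor_left N m i \<in> cantor_int N k (i * 2^d)"
      using assms cantor_left_mem_cantor_int[of N k "i * 2^d"] cantor_left_mult_power
      by (simp_all add: power_add)
    then show ?thesis by blast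
  next
    case False
    then have "i div 2^(m - k) < 2^k"
      using assms by (simp add: div_less_iff_less_mult power_add[symmetric])
    moreover have "cantor_left N m i \<in> cantor_int N k (i div 2^(m - k))"
      using cantor_int_nested[OF assms(1), of k m i] cantor_left_mem_cantor_int[of N m i] False assms(1)
      by auto
    ultimately show ?thesis by blast
  qed
qed

lemma cantor_set_in_child:
  assumes "3 \<le> N" "x \<in> cantor_set N" "x \<in> cantor_int N k j" "j < 2^k"
  shows "x \<in> cantor_int N (Suc k) (2 * j) \<or> x \<in> cantor_int N (Suc k) (2 * j + 1)"
proof -
  obtain i where i: "i < 2^Suc k" "x \<in> cantor_int N (Suc k) i"
    using assms(2) mem_cantor_set_iff by blast
  moreover have "2 \<le> N" using assms(1) by simp
  ultimately have "x \<in> cantor_int N k (i div 2)"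
    using cantor_int_Suc_subset by blast
  then have "i div 2 = j"
    using cantor_int_disjoint[OF assms(1), of "i div 2" k j] assms(3,4) i(1) by fastforce
  then have "i = 2 * j \<or> i = 2 * j + 1" by auto
  then show ?thesis using i by auto
qed

lemma cantor_center_ge_left_child:
  assumes "2 \<le> N" "y \<in> cantor_int N (Suc k) (2 * j)"
  shows "y \<le> cantor_center N k j"
proof -
  have "1 / real N ^ Suc k \<le> 1 / real N ^ k / 2"
    using assms(1) by (simp add: field_simps)
  then show ?thesis
    using assms by (simp add: cantor_int_eq cantor_center_eq cantor_left_even)
qed

lemma cantor_center_le_right_child:
  assumes "2 \<le> N" "y \<in> cantor_int N (Suc k) (2 * j + 1)"
  shows "cantor_center N k j \<le> y"
proof -
  have "1 / real N ^ Suc k \<le> 1 / real N ^ k / 2"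
    using assms(1) by (simp add: field_simps)
  then show ?thesis
    using assms by (simp add: cantor_int_eq cantor_center_eq cantor_left_odd del: power_Suc)
qed

text \<open>A point of the Cantor set lies either in a child of \<open>I\<^sup>m\<^sub>j\<close>, which for
  \<open>N \<ge> 4\<close> keeps a quarter of the parent's length away from its center, or in another
  generation-\<open>m\<close> interval, which is separated from \<open>I\<^sup>m\<^sub>j\<close> by a gap.\<close>

lemma dist_cantor_center_ge:
  assumes "4 \<le> N" "x \<in> cantor_set N" "j < 2^m"
  shows "1 / (4 * real N ^ m) \<le> \<bar>x - cantor_center N m j\<bar>"
proof -
  have N0: "0 < N" "2 \<le> N" "3 \<le> N" using assms(1) by simp_all
  let ?e = "1 / real N ^ m"
  have e0: "0 < ?e" using N0 by simp
  have small: "1 / real N ^ Suc m \<le> ?e / 4" using assms(1) by (simp add: field_simps)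
  obtain i where i: "i < 2^Suc m" "x \<in> cantor_int N (Suc m) i"
    using assms(2) mem_cantor_set_iff by blast
  have x: "x \<in> cantor_int N m (i div 2)"
    using i(2) cantor_int_Suc_subset[OF N0(2)] by blast
  show ?thesis
  proof (cases "i div 2 = j")
    case True
    then have "i = 2 * j \<or> i = 2 * j + 1" by presburger
    then consider "i = 2 * j" | "i = 2 * j + 1" by blast
    then show ?thesis
    proof cases
      case 1
      then show ?thesis using i small e0
        by (simp add: cantor_int_eq[OF N0(1)] cantor_center_eq[OF N0(1)] cantor_left_even abs_if)
    next
      case 2
      then show ?thesis using i x True small e0
        by (simp add: cantor_int_eq[OF N0(1)] cantor_center_eq[OF N0(1)] cantor_left_odd[OF N0(1)] abs_if
            del: power_Suc)
    qed
  next
    case False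
    have "2 * ?e \<le> \<bar>cantor_left N m (i div 2) - cantor_left N m j\<bar>"
      using cantor_left_separated[OF N0(3), of "i div 2" m j] False assms(3) i(1) by simp
    then show ?thesis
      using x e0 by (simp add: cantor_int_eq[OF N0(1)] cantor_center_eq[OF N0(1)] abs_if split: if_splits)
  qed
qed

text \<open>If an interval meets the Cantor set only inside \<open>I\<^sup>k\<^sub>j\<close>, then each
  Cantor center it contains belongs to an ancestor or a descendant of \<open>I\<^sup>k\<^sub>j\<close>:
  between such a center and a point of \<open>I\<^sup>k\<^sub>j\<close> there would otherwise be
  an endpoint of the center's interval, which is a point of the Cantor set outside
  \<open>I\<^sup>k\<^sub>j\<close>.\<close>

lemma cantor_center_mem_interval_cases:
  assumes N: "3 \<le> N" and I: "is_interval (I::real set)"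
    and sub: "I \<inter> cantor_set N \<subseteq> cantor_int N k j" and j: "j < 2^k"
    and y: "y \<in> I \<inter> cantor_set N" and i: "i < 2^m" and c: "cantor_center N m i \<in> I"
  shows "(m \<le> k \<and> i = j div 2^(k - m)) \<or> (k < m \<and> i div 2^(m - k) = j)"
proof -
  have N0: "0 < N" "2 \<le> N" using N by simp_all
  define g where "g = min m k"
  define P where "P = i div 2^(m - g)"
  define Q where "Q = j div 2^(k - g)"
  have P: "P < 2^g" "cantor_int N m i \<subseteq> cantor_int N g P"
    using i cantor_int_nested[OF N0(2)]
    by (auto simp: P_def g_def div_less_iff_less_mult power_add[symmetric])
  have Q: "Q < 2^g" "cantor_int N k j \<subseteq> cantor_int N g Q"
    using j cantor_int_nested[OF N0(2)]
    by (auto simp: Q_def g_def div_less_iff_less_mult power_add[symmetric])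
  show ?thesis
  proof (cases "P = Q")
    case True
    then show ?thesis by (cases "m \<le> k") (auto simp: P_def Q_def g_def)
  next
    case False
    have disj: "cantor_int N g P \<inter> cantor_int N g Q = {}"
      by (rule cantor_int_disjoint[OF N P(1) Q(1) False])
    have outside: "z \<notin> I" if "z \<in> cantor_set N" "z \<in> cantor_int N m i" for z
      using that sub P(2) Q(2) disj by blast
    define e1 where "e1 = cantor_left N (Suc m) (2 * i)"
    define e2 where "e2 = cantor_left N (Suc m) (2 * i + 1)"
    have e1: "e1 \<in> cantor_set N" "e1 \<in> cantor_int N m i" "e1 \<le> cantor_center N m i"
      using cantor_left_mem_cantor_set[OF N0(2)] cantor_left_mem_cantor_int[OF N0(1)] i
        cantor_int_Suc_subset[OF N0(2), of m "2 * i"] cantor_center_ge_left_child[OF N0(2)]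
      by (auto simp: e1_def)
    have e2: "e2 \<in> cantor_set N" "e2 \<in> cantor_int N m i" "cantor_center N m i \<le> e2"
      using cantor_left_mem_cantor_set[OF N0(2)] cantor_left_mem_cantor_int[OF N0(1)] i
        cantor_int_Suc_subset[OF N0(2), of m "2 * i + 1"] cantor_center_le_right_child[OF N0(2)]
      by (auto simp: e2_def)
    have "y \<notin> cantor_int N g P" using y sub Q(2) disj by blast
    moreover have "cantor_center N m i \<in> cantor_int N g P"
      using e1(2) e2(2) e1(3) e2(3) P(2) by (auto simp: cantor_int_eq[OF N0(1)])
    ultimately have "y < cantor_left N g P \<or> cantor_left N g P + 1 / real N ^ g < y"
      by (auto simp: cantor_int_eq[OF N0(1)])
    moreover have "cantor_left N g P \<le> e1" "e2 \<le> cantor_left N g P + 1 / real N ^ g"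
      using e1(2) e2(2) P(2) by (auto simp: cantor_int_eq[OF N0(1)])
    ultimately have "e1 \<in> I \<or> e2 \<in> I"
      using I y c e1(3) e2(3) unfolding is_interval_1 by (meson IntD1 order.trans less_imp_le)
    then show ?thesis using outside e1 e2 by blast
  qed
qed

section \<open>The flattened kernel\<close>

text \<open>Rescale \<open>y\<close> by the power of \<open>N\<close> that brings it into
  \<open>[N\<^sup>-\<^sup>1\<^sup>/\<^sup>2, N\<^sup>1\<^sup>/\<^sup>2]\<close>, where \<open>K\<close> takes values in the same interval.\<close>

lemma flat_kernel_nonneg_le:
  assumes N: "2 \<le> N" and K: "flat_kernel N \<rho> K" and y: "0 < y"
  shows "0 \<le> K y \<and> K y \<le> real N / y"
proof -
  let ?n = "real N"
  have n1: "1 \<le> ?n" using N by simp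
  define t where "t = log ?n y"
  define k where "k = \<lfloor>t + 1/2\<rfloor>"
  have t: "real_of_int k - 1/2 \<le> t" "t \<le> real_of_int k + 1/2"
    unfolding k_def by linarith+
  have y_eq: "y = ?n powr t" using N y by (simp add: t_def)
  have "?n powr (real_of_int k - 1/2) \<le> y" "y \<le> ?n powr (real_of_int k + 1/2)"
    using t n1 unfolding y_eq by (simp_all add: powr_mono)
  then have Ky: "K y = ?n powr (- real_of_int k) * K (?n powr (t - real_of_int k))"
    using K unfolding flat_kernel_def Let_def
    by (simp add: y_eq powr_add[symmetric])
  have "?n powr (-1/2) \<le> ?n powr (t - real_of_int k)" "?n powr (t - real_of_int k) \<le> ?n powr (1/2)"
    using t n1 by (simp_all add: powr_mono)
  then have Kz: "?n powr (-1/2) \<le> K (?n powr (t - real_of_int k))"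
    "K (?n powr (t - real_of_int k)) \<le> ?n powr (1/2)"
    using K unfolding flat_kernel_def Let_def by auto
  have "K y \<le> ?n powr (- real_of_int k) * ?n powr (1/2)"
    unfolding Ky using Kz(2) by (intro mult_left_mono) auto
  also have "\<dots> \<le> ?n powr (1 - t)"
    using t n1 by (simp add: powr_add[symmetric] powr_mono)
  also have "\<dots> = ?n / y"
    using N by (simp add: y_eq powr_diff)
  finally have "K y \<le> ?n / y" .
  moreover have "0 \<le> K (?n powr (t - real_of_int k))"
    using Kz(1) powr_ge_zero[of ?n "-1/2"] by linarith
  ultimately show ?thesis by (simp add: Ky)
qed

lemma flat_kernel_abs_le:
  assumes N: "2 \<le> N" and K: "flat_kernel N \<rho> K" and y: "y \<noteq> 0"
  shows "\<bar>K y\<bar> \<le> real N / \<bar>y\<bar>"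
proof (cases "0 < y")
  case True
  then show ?thesis using flat_kernel_nonneg_le[OF N K] by simp
next
  case False
  then have "0 \<le> K (- y) \<and> K (- y) \<le> real N / (- y)"
    using flat_kernel_nonneg_le[OF N K, of "- y"] y by simp
  moreover have "K (- y) = - K y"
    using K y unfolding flat_kernel_def Let_def by blast
  ultimately show ?thesis using False by simp
qed

section \<open>Masses of the Cantor intervals\<close>

definition cantor_split_min :: "nat \<Rightarrow> real" where
  "cantor_split_min N = (1 - 1 / real N) / 2"

definition cantor_split_max :: "nat \<Rightarrow> real" where
  "cantor_split_max N = (1 + 1 / real N) / 2"

lemma cantor_split_min_pos: "2 \<le> N \<Longrightarrow> 0 < cantor_split_min N"
  by (simp add: cantor_split_min_def field_simps)

lemma omega_mass_pos: "2 \<le> N \<Longrightarrow> 0 < omega_mass N k i"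
  by (induction k arbitrary: i) (auto simp: field_simps intro!: mult_pos_pos)

lemma omega_mass_Suc_bounds:
  assumes "2 \<le> N"
  shows "omega_mass N k (i div 2) * cantor_split_min N \<le> omega_mass N (Suc k) i"
    and "omega_mass N (Suc k) i \<le> omega_mass N k (i div 2) * cantor_split_max N"
  using assms omega_mass_pos[OF assms, of k "i div 2"]
  by (auto simp: cantor_split_min_def cantor_split_max_def field_simps intro!: mult_left_mono)

declare omega_mass.simps(2)[simp del]

lemma omega_mass_descendant_ge:
  assumes N: "2 \<le> N"
  shows "omega_mass N k (i div 2^d) * cantor_split_min N ^ d \<le> omega_mass N (k + d) i"
proof (induction d arbitrary: i)
  case (Suc d)
  have "omega_mass N k (i div 2^Suc d) * cantor_split_min N ^ Suc d
      = (omega_mass N k (i div 2 div 2^d) * cantor_split_min N ^ d) * cantor_split_min N"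
    by (simp add: div_mult2_eq mult_ac)
  also have "\<dots> \<le> omega_mass N (k + d) (i div 2) * cantor_split_min N"
    using Suc.IH[of "i div 2"] cantor_split_min_pos[OF N] by (intro mult_right_mono) auto
  also have "\<dots> \<le> omega_mass N (k + Suc d) i"
    using omega_mass_Suc_bounds(1)[OF N] by simp
  finally show ?case .
qed simp

lemma omega_mass_descendant_le:
  assumes N: "2 \<le> N"
  shows "omega_mass N (k + d) i \<le> omega_mass N k (i div 2^d) * cantor_split_max N ^ d"
proof (induction d arbitrary: i)
  case (Suc d)
  have "omega_mass N (k + Suc d) i \<le> omega_mass N (k + d) (i div 2) * cantor_split_max N"
    using omega_mass_Suc_bounds(2)[OF N] by simp
  also have "\<dots> \<le> (omega_mass N k (i div 2 div 2^d) * cantor_split_max N ^ d) * cantor_split_max N"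
    using Suc.IH[of "i div 2"] N by (intro mult_right_mono) (auto simp: cantor_split_max_def)
  also have "\<dots> = omega_mass N k (i div 2^Suc d) * cantor_split_max N ^ Suc d"
    by (simp add: div_mult2_eq mult_ac)
  finally show ?case .
qed simp

definition length_mass_ratio :: "nat \<Rightarrow> nat \<Rightarrow> nat \<Rightarrow> real" where
  "length_mass_ratio N k j = 1 / real N ^ k / omega_mass N k j"

lemma length_mass_ratio_nonneg: "2 \<le> N \<Longrightarrow> 0 \<le> length_mass_ratio N k j"
  using omega_mass_pos[of N k j] by (simp add: length_mass_ratio_def)

abbreviation cantor_descendants :: "nat \<Rightarrow> nat \<Rightarrow> nat \<Rightarrow> nat set" where
  "cantor_descendants k j m \<equiv> (\<lambda>r. j * 2^(m - k) + r) ` {..<2^(m - k)}"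

lemma length_mass_ratio_sum_generation_le:
  assumes N: "9 \<le> N" and "k \<le> m"
  shows "(\<Sum>i\<in>cantor_descendants k j m. length_mass_ratio N m i)
           \<le> length_mass_ratio N k j * (1/2) ^ (m - k)"
proof -
  define d where "d = m - k"
  have N2: "2 \<le> N" using N by simp
  have m: "m = k + d" using assms(2) by (simp add: d_def)
  have c: "0 < cantor_split_min N" "4 \<le> real N * cantor_split_min N"
    using N by (simp_all add: cantor_split_min_def field_simps)
  have wj: "0 < omega_mass N k j" by (rule omega_mass_pos[OF N2])
  have each: "length_mass_ratio N m (j * 2^d + r) \<le> length_mass_ratio N k j * (1 / (real N * cantor_split_min N)) ^ d"
    if "r < 2^d" for r
  proof -
    have "omega_mass N k j * cantor_split_min N ^ d \<le> omega_mass N m (j * 2^d + r)"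
      using omega_mass_descendant_ge[OF N2, of k "j * 2^d + r" d] that by (simp add: m)
    then have "1 / real N ^ m / omega_mass N m (j * 2^d + r)
             \<le> 1 / real N ^ m / (omega_mass N k j * cantor_split_min N ^ d)"
      using wj c omega_mass_pos[OF N2] by (intro divide_left_mono mult_pos_pos) auto
    then show ?thesis
      by (simp add: length_mass_ratio_def m power_add power_divide power_mult_distrib field_simps)
  qed
  have "(\<Sum>i\<in>cantor_descendants k j m. length_mass_ratio N m i)
      = (\<Sum>r<2^d. length_mass_ratio N m (j * 2^d + r))"
    by (simp add: sum.reindex d_def)
  also have "\<dots> \<le> (\<Sum>r<(2::nat)^d. length_mass_ratio N k j * (1 / (real N * cantor_split_min N)) ^ d)"
    by (intro sum_mono each) simp
  also have "\<dots> = 2^d * (length_mass_ratio N k j * (1 / (real N * cantor_split_min N)) ^ d)"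
    by simp
  also have "\<dots> = length_mass_ratio N k j * (2 / (real N * cantor_split_min N)) ^ d"
    by (simp add: power_divide)
  also have "\<dots> \<le> length_mass_ratio N k j * (1/2) ^ d"
    using c N2 by (intro mult_left_mono power_mono length_mass_ratio_nonneg) (auto simp: field_simps)
  finally show ?thesis by (simp add: d_def)
qed

lemma length_mass_ratio_sum_descendants_le:
  assumes "9 \<le> N"
  shows "(\<Sum>(m, i)\<in>Sigma {k<..n} (cantor_descendants k j). length_mass_ratio N m i)
           \<le> length_mass_ratio N k j"
proof -
  have "(\<Sum>(m, i)\<in>Sigma {k<..n} (cantor_descendants k j). length_mass_ratio N m i)
      = (\<Sum>m\<in>{k<..n}. \<Sum>i\<in>cantor_descendants k j m. length_mass_ratio N m i)"
    by (rule sum.Sigma[symmetric]) auto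
  also have "\<dots> \<le> (\<Sum>m\<in>{k<..n}. length_mass_ratio N k j * (1/2) ^ (m - k))"
    using length_mass_ratio_sum_generation_le[OF assms] by (intro sum_mono) auto
  also have "\<dots> = length_mass_ratio N k j * (1/2) * (\<Sum>m\<in>{k<..n}. (1/2) ^ (m - Suc k))"
    by (simp add: sum_distrib_left Suc_diff_Suc[symmetric] mult_ac del: Suc_diff_Suc)
  also have "\<dots> \<le> length_mass_ratio N k j * (1/2) * (1 / (1 - 1/2))"
    using assms length_mass_ratio_nonneg[of N k j]
    by (intro mult_left_mono sum_power_inj_le) (auto simp: inj_on_def)
  finally show ?thesis by simp
qed

definition ancestor_ratio_sum :: "nat \<Rightarrow> real set \<Rightarrow> nat \<Rightarrow> nat \<Rightarrow> real" where
  "ancestor_ratio_sum N I k j =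
     (\<Sum>m | m \<le> k \<and> cantor_center N m (j div 2^(k - m)) \<in> I. length_mass_ratio N m (j div 2^(k - m)))"

lemma ancestor_ratio_sum_nonneg: "2 \<le> N \<Longrightarrow> 0 \<le> ancestor_ratio_sum N I k j"
  unfolding ancestor_ratio_sum_def by (intro sum_nonneg length_mass_ratio_nonneg)

lemma length_mass_ratio_le_ancestor_ratio_sum:
  assumes "2 \<le> N" "cantor_center N k j \<in> I"
  shows "length_mass_ratio N k j \<le> ancestor_ratio_sum N I k j"
  unfolding ancestor_ratio_sum_def
  using assms member_le_sum[of k "{m. m \<le> k \<and> cantor_center N m (j div 2^(k - m)) \<in> I}"
      "\<lambda>m. length_mass_ratio N m (j div 2^(k - m))"] length_mass_ratio_nonneg[OF assms(1)]
  by simp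

lemma centers_length_mass_ratio_sum_le:
  assumes N: "9 \<le> N" and I: "is_interval I" and sub: "I \<inter> cantor_set N \<subseteq> cantor_int N k j"
    and j: "j < 2^k" and y: "y \<in> I \<inter> cantor_set N" and c: "cantor_center N k j \<in> I"
    and F: "finite F" "F \<subseteq> {(m, i). i < 2^m \<and> cantor_center N m i \<in> I}"
  shows "(\<Sum>(m, i)\<in>F. length_mass_ratio N m i) \<le> 2 * ancestor_ratio_sum N I k j"
proof -
  have N2: "2 \<le> N" "3 \<le> N" using N by simp_all
  define S where "S = {m. m \<le> k \<and> cantor_center N m (j div 2^(k - m)) \<in> I}"
  define n where "n = Max (insert 0 (fst ` F))"
  define A where "A = (\<lambda>m. (m, j div 2^(k - m))) ` S"
  define D where "D = Sigma {k<..n} (cantor_descendants k j)"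
  let ?r = "\<lambda>(m, i). length_mass_ratio N m i"
  have "F \<subseteq> A \<union> D"
  proof
    fix p assume p: "p \<in> F"
    obtain m i where mi: "p = (m, i)" by fastforce
    have "m \<in> fst ` F" using p mi by force
    then have "m \<le> n" using F(1) by (simp add: n_def)
    have "i < 2^m" "cantor_center N m i \<in> I" using p F(2) by (auto simp: mi)
    then consider "m \<le> k" "i = j div 2^(k - m)" | "k < m" "i div 2^(m - k) = j"
      using cantor_center_mem_interval_cases[OF N2(2) I sub j y] by blast
    then show "p \<in> A \<union> D"
    proof cases
      case 1
      then show ?thesis using \<open>cantor_center N m i \<in> I\<close> by (auto simp: A_def S_def mi)
    next
      case 2
      then have "i = j * 2^(m - k) + i mod 2^(m - k)"
        by (metis div_mult_mod_eq)
      then show ?thesis using 2 \<open>m \<le> n\<close> by (auto simp: D_def mi)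
    qed
  qed
  then have "sum ?r F \<le> sum ?r (A \<union> D)"
    using length_mass_ratio_nonneg[OF N2(1)]
    by (intro sum_mono2) (auto simp: A_def D_def S_def)
  also have "\<dots> = sum ?r A + sum ?r D"
    by (intro sum.union_disjoint) (auto simp: A_def D_def S_def)
  also have "sum ?r A = ancestor_ratio_sum N I k j"
    unfolding A_def ancestor_ratio_sum_def S_def by (subst sum.reindex) (auto simp: inj_on_def)
  also have "sum ?r D \<le> ancestor_ratio_sum N I k j"
    using length_mass_ratio_sum_descendants_le[OF N]
      length_mass_ratio_le_ancestor_ratio_sum[OF N2(1) c]
    unfolding D_def by (rule order.trans)
  finally show ?thesis by simp
qed

section \<open>The estimate\<close>

lemma exists_smallest_cantor_int:
  assumes "A \<subseteq> cantor_set N" and "\<not> (\<forall>k. \<exists>j<2^k. A \<subseteq> cantor_int N k j)"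
  obtains k j where "j < 2^k" "A \<subseteq> cantor_int N k j"
    "\<not> A \<subseteq> cantor_int N (Suc k) (2 * j)" "\<not> A \<subseteq> cantor_int N (Suc k) (2 * j + 1)"
proof -
  define P where "P k \<longleftrightarrow> (\<exists>j<2^k. A \<subseteq> cantor_int N k j)" for k
  have "cantor_set N \<subseteq> (\<Union>j\<in>{..<2^0}. cantor_int N 0 j)"
    unfolding cantor_set_def by (rule INT_lower) simp
  then have "P 0" using assms(1) by (auto simp: P_def)
  moreover obtain k' where "\<not> P k'" using assms(2) by (auto simp: P_def)
  ultimately obtain k where "P k" "\<not> P (Suc k)"
    by (metis dec_induct zero_le)
  then obtain j where "j < 2^k" "A \<subseteq> cantor_int N k j" by (auto simp: P_def)
  moreover have "2 * j < 2^Suc k" "2 * j + 1 < 2^Suc k" using \<open>j < 2^k\<close> by simp_all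
  ultimately show ?thesis using \<open>\<not> P (Suc k)\<close> that by (auto simp: P_def)
qed

lemma cantor_center_mem_interval:
  assumes N: "3 \<le> N" and I: "is_interval I" and sub: "I \<inter> cantor_set N \<subseteq> cantor_int N k j"
    and j: "j < 2^k"
    and left: "\<not> I \<inter> cantor_set N \<subseteq> cantor_int N (Suc k) (2 * j)"
    and right: "\<not> I \<inter> cantor_set N \<subseteq> cantor_int N (Suc k) (2 * j + 1)"
  shows "cantor_center N k j \<in> I"
proof -
  have N2: "2 \<le> N" using N by simp
  obtain y where y: "y \<in> I" "y \<in> cantor_set N" "y \<notin> cantor_int N (Suc k) (2 * j)"
    using left by blast
  obtain y' where y': "y' \<in> I" "y' \<in> cantor_set N" "y' \<notin> cantor_int N (Suc k) (2 * j + 1)"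
    using right by blast
  have "y' \<le> cantor_center N k j"
    using cantor_set_in_child[OF N y'(2) _ j] sub y' cantor_center_ge_left_child[OF N2] by blast
  moreover have "cantor_center N k j \<le> y"
    using cantor_set_in_child[OF N y(2) _ j] sub y cantor_center_le_right_child[OF N2] by blast
  ultimately show ?thesis
    using I y(1) y'(1) unfolding is_interval_1 by blast
qed

locale redistributed_cantor =
  fixes N :: nat and M :: "real measure"
  assumes N_ge: "9 \<le> N" and redistributed: "redistributed_cantor_measure N M"
begin

lemma N_ge_small: "2 \<le> N" "3 \<le> N" "4 \<le> N"
  using N_ge by simp_all

lemma finite_measure_M: "finite_measure M"
  using redistributed prob_space.finite_measure
  unfolding redistributed_cantor_measure_def by blast

lemma sets_M: "sets M = sets borel"
  using redistributed unfolding redistributed_cantor_measure_def by blast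

lemma cantor_int_sets: "cantor_int N k j \<in> sets M"
  by (simp add: sets_M cantor_int_def)

lemma AE_cantor_set: "AE x in M. x \<in> cantor_set N"
proof (rule AE_I')
  have "closed (cantor_set N)"
    unfolding cantor_set_def by (intro closed_INT ballI closed_Union) (auto simp: cantor_int_def)
  then show "- cantor_set N \<in> null_sets M"
    using redistributed by (auto simp: redistributed_cantor_measure_def null_sets_def sets_M)
qed auto

lemma measure_cantor_int: "j < 2^k \<Longrightarrow> measure M (cantor_int N k j) = omega_mass N k j"
  using redistributed unfolding redistributed_cantor_measure_def by blast

lemma weight_s_eq:
  assumes "j < 2^k"
  shows "weight_s N M k j = (length_mass_ratio N k j)\<^sup>2 * omega_mass N k j"
proof -
  have "real N powr (- 2 * real k) = 1 / real N ^ (2 * k)"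
    using of_nat_powr_minus[of N "2 * k"] N_ge by simp
  then show ?thesis
    using omega_mass_pos[OF N_ge_small(1), of k j]
    by (simp add: weight_s_def measure_cantor_int[OF assms] length_mass_ratio_def
        power2_eq_square power_mult mult_2 power_add field_simps)
qed

lemma weight_s_nonneg: "j < 2^k \<Longrightarrow> 0 \<le> weight_s N M k j"
  using omega_mass_pos[OF N_ge_small(1), of k j] by (simp add: weight_s_eq)

lemma weight_s_le:
  assumes "j < 2^k"
  shows "weight_s N M k j \<le> (1/4)^k"
proof -
  have c: "0 < cantor_split_min N" "4 \<le> real N * cantor_split_min N"
    using N_ge by (simp_all add: cantor_split_min_def field_simps)
  have "weight_s N M k j = 1 / real N ^ (2 * k) / omega_mass N k j"
    using assms omega_mass_pos[OF N_ge_small(1), of k j]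
    by (simp add: weight_s_eq length_mass_ratio_def power2_eq_square power_mult mult_2 power_add)
  also have "\<dots> \<le> 1 / real N ^ (2 * k) / cantor_split_min N ^ k"
    using omega_mass_descendant_ge[OF N_ge_small(1), of 0 j k] c omega_mass_pos[OF N_ge_small(1)]
    by (intro divide_left_mono mult_pos_pos) auto
  also have "\<dots> = (1 / (real N * (real N * cantor_split_min N))) ^ k"
    by (simp add: power_mult power_mult_distrib power_divide mult_2 power_add)
  also have "\<dots> \<le> (1/4)^k"
    using c N_ge by (intro power_mono) (auto simp: field_simps intro: order.trans[of _ "real N * 4"])
  finally show ?thesis .
qed

lemma weight_s_summable_on:
  assumes "A \<subseteq> {(k, j). j < 2^k}"
  shows "(\<lambda>(k, j). weight_s N M k j) summable_on A"
proof (rule nonneg_bdd_above_summable_on)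
  show "0 \<le> (\<lambda>(k, j). weight_s N M k j) p" if "p \<in> A" for p
    using that assms weight_s_nonneg by auto
  have "sum (\<lambda>(k, j). weight_s N M k j) F \<le> 2" if F: "finite F" "F \<subseteq> A" for F
  proof -
    define n where "n = Max (insert 0 (fst ` F))"
    have "F \<subseteq> Sigma {..n} (\<lambda>k. {..<2^k})"
    proof
      fix p assume "p \<in> F"
      then have "fst p \<le> n" using F(1) by (simp add: n_def)
      then show "p \<in> Sigma {..n} (\<lambda>k. {..<2^k})" using \<open>p \<in> F\<close> F(2) assms by auto
    qed
    then have "sum (\<lambda>(k, j). weight_s N M k j) F \<le> sum (\<lambda>(k, j). weight_s N M k j) (Sigma {..n} (\<lambda>k. {..<2^k}))"
      using weight_s_nonneg by (intro sum_mono2) auto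
    also have "\<dots> = (\<Sum>k\<le>n. \<Sum>j<2^k. weight_s N M k j)"
      by (rule sum.Sigma[symmetric]) auto
    also have "\<dots> \<le> (\<Sum>k\<le>n. \<Sum>j<(2::nat)^k. (1/4::real)^k)"
      by (intro sum_mono weight_s_le) auto
    also have "\<dots> = (\<Sum>k\<le>n. 2^k * (1/4::real)^k)"
      by simp
    also have "\<dots> = (\<Sum>k\<le>n. (1/2::real)^k)"
      by (simp only: power_mult_distrib[symmetric]) simp
    also have "\<dots> \<le> 1 / (1 - 1/2)"
      using sum_power_inj_le[of "1/2" "{..n}" "\<lambda>k. k"] by simp
    finally show ?thesis by simp
  qed
  then show "bdd_above (sum (\<lambda>(k, j). weight_s N M k j) ` {F. F \<subseteq> A \<and> finite F})"
    by (auto intro!: bdd_aboveI)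
qed

lemma weight_s_le_sigma_dot:
  assumes "j < 2^k" "cantor_center N k j \<in> I"
  shows "weight_s N M k j \<le> sigma_dot N M I"
proof -
  let ?T = "{(k, j). j < 2^k \<and> cantor_center N k j \<in> I}"
  have "infsum (\<lambda>(k, j). weight_s N M k j) {(k, j)} \<le> infsum (\<lambda>(k, j). weight_s N M k j) ?T"
    using assms weight_s_nonneg
    by (intro infsum_mono_neutral weight_s_summable_on) auto
  then show ?thesis unfolding sigma_dot_def by simp
qed

lemma sigma_dot_nonneg: "0 \<le> sigma_dot N M I"
  unfolding sigma_dot_def by (rule infsum_nonneg) (auto intro: weight_s_nonneg)

lemma kernel_term_abs_le:
  assumes K: "flat_kernel N \<rho> K" and x: "x \<in> cantor_set N" and i: "i < 2^m"
  shows "\<bar>weight_s N M m i * K (x - cantor_center N m i)\<bar> \<le> 4 * real N * length_mass_ratio N m i"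
proof -
  let ?d = "x - cantor_center N m i"
  have Nm: "0 < real N ^ m" using N_ge by simp
  have dist: "1 / (4 * real N ^ m) \<le> \<bar>?d\<bar>"
    by (rule dist_cantor_center_ge[OF N_ge_small(3) x i])
  moreover have pos: "0 < 1 / (4 * real N ^ m)" using Nm by simp
  ultimately have d_pos: "0 < \<bar>?d\<bar>" by linarith
  then have "\<bar>K ?d\<bar> \<le> real N / \<bar>?d\<bar>"
    by (intro flat_kernel_abs_le[OF N_ge_small(1) K]) simp
  also have "\<dots> \<le> real N / (1 / (4 * real N ^ m))"
    using divide_left_mono[OF dist _ mult_pos_pos[OF d_pos pos]] by simp
  finally have "\<bar>K ?d\<bar> \<le> real N / (1 / (4 * real N ^ m))" .
  then have "weight_s N M m i * \<bar>K ?d\<bar> \<le> weight_s N M m i * (4 * real N * real N ^ m)"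
    using weight_s_nonneg[OF i] by (intro mult_left_mono) (auto simp: field_simps)
  also have "\<dots> = 4 * real N * length_mass_ratio N m i"
    using Nm omega_mass_pos[OF N_ge_small(1), of m i]
    by (simp add: weight_s_eq[OF i] length_mass_ratio_def power2_eq_square field_simps)
  finally show ?thesis
    using weight_s_nonneg[OF i] by (simp add: abs_mult)
qed

lemma H_flat_I_abs_le:
  assumes K: "flat_kernel N \<rho> K" and I: "is_interval I"
    and sub: "I \<inter> cantor_set N \<subseteq> cantor_int N k j" and j: "j < 2^k"
    and c: "cantor_center N k j \<in> I" and x: "x \<in> I \<inter> cantor_set N"
  shows "\<bar>H_flat_I N K M I x\<bar> \<le> 8 * real N * ancestor_ratio_sum N I k j"
proof -
  let ?T = "{(m, i). i < 2^m \<and> cantor_center N m i \<in> I}"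
  define f where "f = (\<lambda>(m, i). weight_s N M m i * K (x - cantor_center N m i))"
  have finite_sums: "(\<Sum>p\<in>F. norm (f p)) \<le> 8 * real N * ancestor_ratio_sum N I k j"
    if F: "finite F" "F \<subseteq> ?T" for F
  proof -
    have "(\<Sum>p\<in>F. norm (f p)) \<le> (\<Sum>(m, i)\<in>F. 4 * real N * length_mass_ratio N m i)"
      using F(2) kernel_term_abs_le[OF K] x by (intro sum_mono) (auto simp: f_def)
    also have "\<dots> = 4 * real N * (\<Sum>(m, i)\<in>F. length_mass_ratio N m i)"
      by (simp add: sum_distrib_left case_prod_beta)
    also have "\<dots> \<le> 4 * real N * (2 * ancestor_ratio_sum N I k j)"
      using centers_length_mass_ratio_sum_le[OF N_ge I sub j x c F] by (intro mult_left_mono) auto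
    finally show ?thesis by simp
  qed
  have summable: "(\<lambda>p. norm (f p)) summable_on ?T"
    using finite_sums by (intro nonneg_bdd_above_summable_on) (auto intro!: bdd_aboveI)
  have "\<bar>H_flat_I N K M I x\<bar> = norm (infsum f ?T)"
    by (simp add: H_flat_I_def f_def)
  also have "\<dots> \<le> infsum (\<lambda>p. norm (f p)) ?T"
    by (rule norm_infsum_bound[OF summable])
  also have "\<dots> \<le> 8 * real N * ancestor_ratio_sum N I k j"
    by (rule infsum_le_finite_sums[OF summable finite_sums])
  finally show ?thesis .
qed

text \<open>The ancestor's own weight is at most \<open>\<sigma>(I)\<close>, and the mass of \<open>I\<^sup>k\<^sub>j\<close>
  is smaller than the ancestor's by a factor \<open>(9/16)\<^bsup>k - m\<^esup>\<close>.\<close>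

lemma ancestor_length_mass_ratio_le:
  assumes j: "j < 2^k" and m: "m \<le> k" and c: "cantor_center N m (j div 2^(k - m)) \<in> I"
  shows "length_mass_ratio N m (j div 2^(k - m)) * sqrt (omega_mass N k j)
           \<le> sqrt (sigma_dot N M I) * (3/4)^(k - m)"
proof -
  let ?i = "j div 2^(k - m)" and ?w = "omega_mass N k j" and ?s = "sigma_dot N M I"
  have s: "0 \<le> ?s" by (rule sigma_dot_nonneg)
  have i: "?i < 2^m"
    using j m by (simp add: div_less_iff_less_mult power_add[symmetric])
  have max: "0 \<le> cantor_split_max N" "cantor_split_max N \<le> 9/16"
    using N_ge by (simp_all add: cantor_split_max_def field_simps)
  have "?w \<le> omega_mass N m ?i * cantor_split_max N ^ (k - m)"
    using omega_mass_descendant_le[OF N_ge_small(1), of m "k - m" j] m by simp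
  also have "\<dots> \<le> omega_mass N m ?i * (9/16) ^ (k - m)"
    using max omega_mass_pos[OF N_ge_small(1)] by (intro mult_left_mono power_mono) (auto intro: less_imp_le)
  finally have "(length_mass_ratio N m ?i * sqrt ?w)\<^sup>2
      \<le> (length_mass_ratio N m ?i)\<^sup>2 * omega_mass N m ?i * (9/16) ^ (k - m)"
    using omega_mass_pos[OF N_ge_small(1), of k j]
    by (simp add: power_mult_distrib mult_left_mono mult.assoc)
  also have "\<dots> \<le> ?s * (9/16) ^ (k - m)"
    using weight_s_le_sigma_dot[OF i c] weight_s_eq[OF i] by (intro mult_right_mono) auto
  also have "\<dots> = (sqrt ?s * (3/4)^(k - m))\<^sup>2"
  proof -
    have "((3/4::real)^(k - m))\<^sup>2 = (9/16)^(k - m)"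
      by (simp add: power2_eq_square power_mult_distrib[symmetric])
    then show ?thesis using s by (simp add: power_mult_distrib)
  qed
  finally show ?thesis
    by (rule power2_le_imp_le) (use s in simp)
qed

lemma ancestor_ratio_sum_sq_le:
  assumes j: "j < 2^k"
  shows "(ancestor_ratio_sum N I k j)\<^sup>2 * omega_mass N k j \<le> 16 * sigma_dot N M I"
proof -
  let ?w = "omega_mass N k j" and ?s = "sigma_dot N M I"
  define S where "S = {m. m \<le> k \<and> cantor_center N m (j div 2^(k - m)) \<in> I}"
  have w: "0 < ?w" by (rule omega_mass_pos[OF N_ge_small(1)])
  have s: "0 \<le> ?s" by (rule sigma_dot_nonneg)
  have "ancestor_ratio_sum N I k j * sqrt ?w \<le> (\<Sum>m\<in>S. sqrt ?s * (3/4)^(k - m))"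
    unfolding ancestor_ratio_sum_def S_def[symmetric] sum_distrib_right
    using ancestor_length_mass_ratio_le[OF j] by (intro sum_mono) (auto simp: S_def)
  also have "\<dots> = sqrt ?s * (\<Sum>m\<in>S. (3/4)^(k - m))"
    by (simp add: sum_distrib_left)
  also have "\<dots> \<le> sqrt ?s * (1 / (1 - 3/4))"
    using s by (intro mult_left_mono sum_power_inj_le) (auto simp: S_def inj_on_def)
  finally have "(ancestor_ratio_sum N I k j * sqrt ?w)\<^sup>2 \<le> (4 * sqrt ?s)\<^sup>2"
    using w ancestor_ratio_sum_nonneg[OF N_ge_small(1)] by (intro power_mono) auto
  then show ?thesis
    using w s by (simp add: power_mult_distrib)
qed

lemma AE_not_in_nested_cantor_ints:
  assumes "\<forall>k. \<exists>j<2^k. A \<subseteq> cantor_int N k j"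
  shows "AE x in M. x \<notin> A"
proof -
  obtain J where J: "\<And>k. J k < 2^k" "\<And>k. A \<subseteq> cantor_int N k (J k)"
    using assms by metis
  define Z where "Z = (\<Inter>k. cantor_int N k (J k))"
  have Z_sets: "Z \<in> sets M"
    unfolding Z_def using cantor_int_sets by blast
  have Z_le: "measure M Z \<le> cantor_split_max N ^ k" for k
  proof -
    have "measure M Z \<le> measure M (cantor_int N k (J k))"
      by (rule finite_measure.finite_measure_mono[OF finite_measure_M]) (auto simp: Z_def cantor_int_sets)
    also have "\<dots> \<le> cantor_split_max N ^ k"
      using omega_mass_descendant_le[OF N_ge_small(1), of 0 k "J k"] by (simp add: measure_cantor_int J(1))
    finally show ?thesis .
  qed
  have "measure M Z \<le> 0"
  proof (rule ccontr)
    assume "\<not> measure M Z \<le> 0"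
    moreover have "cantor_split_max N < 1"
      using N_ge by (simp add: cantor_split_max_def field_simps)
    ultimately obtain k where "cantor_split_max N ^ k < measure M Z"
      using real_arch_pow_inv[of "measure M Z"] by auto
    then show False using Z_le[of k] by simp
  qed
  then have "Z \<in> null_sets M"
    using Z_sets finite_measure.emeasure_eq_measure[OF finite_measure_M, of Z]
    by (simp add: null_sets_def measure_le_0_iff)
  then have "AE x in M. x \<notin> Z" by (rule AE_not_in)
  then show ?thesis
    by eventually_elim (use J(2) in \<open>auto simp: Z_def\<close>)
qed

lemma nn_integral_sq_le_of_abs_le:
  assumes sub: "I \<inter> cantor_set N \<subseteq> cantor_int N k j" and j: "j < 2^k"
    and h: "\<And>x. x \<in> I \<inter> cantor_set N \<Longrightarrow> \<bar>h x\<bar> \<le> B"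
  shows "(\<integral>\<^sup>+ x \<in> I. ennreal ((h x)\<^sup>2) \<partial>M) \<le> ennreal (B\<^sup>2 * omega_mass N k j)"
proof -
  have "AE x in M. ennreal ((h x)\<^sup>2) * indicator I x \<le> ennreal (B\<^sup>2) * indicator (cantor_int N k j) x"
    using AE_cantor_set
  proof eventually_elim
    case (elim x)
    show ?case
    proof (cases "x \<in> I")
      case True
      then have "\<bar>h x\<bar>\<^sup>2 \<le> B\<^sup>2" using h elim by (intro power_mono) auto
      then show ?thesis using True elim sub by (auto intro: ennreal_leI)
    qed simp
  qed
  then have "(\<integral>\<^sup>+ x \<in> I. ennreal ((h x)\<^sup>2) \<partial>M) \<le> (\<integral>\<^sup>+ x. ennreal (B\<^sup>2) * indicator (cantor_int N k j) x \<partial>M)"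
    by (rule nn_integral_mono_AE)
  also have "\<dots> = ennreal (B\<^sup>2) * emeasure M (cantor_int N k j)"
    by (rule nn_integral_cmult_indicator) (rule cantor_int_sets)
  also have "\<dots> = ennreal (B\<^sup>2 * omega_mass N k j)"
    using finite_measure.emeasure_eq_measure[OF finite_measure_M] measure_cantor_int[OF j]
      omega_mass_pos[OF N_ge_small(1), of k j]
    by (simp add: ennreal_mult)
  finally show ?thesis .
qed

lemma nn_integral_H_flat_I_sq_le:
  assumes K: "flat_kernel N \<rho> K" and I: "is_interval I"
  shows "(\<integral>\<^sup>+ x \<in> I. ennreal ((H_flat_I N K M I x)\<^sup>2) \<partial>M)
           \<le> ennreal (1024 * (real N)\<^sup>2 * sigma_dot N M I)"
proof (cases "\<forall>k. \<exists>j<2^k. I \<inter> cantor_set N \<subseteq> cantor_int N k j")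
  case True
  have null: "AE x in M. ennreal ((H_flat_I N K M I x)\<^sup>2) * indicator I x = 0"
    using AE_not_in_nested_cantor_ints[OF True] AE_cantor_set by eventually_elim auto
  show ?thesis using nn_integral_cong_AE[OF null] by simp
next
  case False
  obtain k j where j: "j < 2^k" and sub: "I \<inter> cantor_set N \<subseteq> cantor_int N k j"
    and left: "\<not> I \<inter> cantor_set N \<subseteq> cantor_int N (Suc k) (2 * j)"
    and right: "\<not> I \<inter> cantor_set N \<subseteq> cantor_int N (Suc k) (2 * j + 1)"
    by (rule exists_smallest_cantor_int[OF Int_lower2 False])
  have c: "cantor_center N k j \<in> I"
    by (rule cantor_center_mem_interval[OF N_ge_small(2) I sub j left right])
  let ?B = "8 * real N * ancestor_ratio_sum N I k j"
  have "(\<integral>\<^sup>+ x \<in> I. ennreal ((H_flat_I N K M I x)\<^sup>2) \<partial>M) \<le> ennreal (?B\<^sup>2 * omega_mass N k j)"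
    using H_flat_I_abs_le[OF K I sub j c] by (intro nn_integral_sq_le_of_abs_le[OF sub j])
  also have "\<dots> \<le> ennreal (1024 * (real N)\<^sup>2 * sigma_dot N M I)"
  proof (rule ennreal_leI)
    have "?B\<^sup>2 * omega_mass N k j = 64 * (real N)\<^sup>2 * ((ancestor_ratio_sum N I k j)\<^sup>2 * omega_mass N k j)"
      by (simp add: power_mult_distrib)
    also have "\<dots> \<le> 64 * (real N)\<^sup>2 * (16 * sigma_dot N M I)"
      using ancestor_ratio_sum_sq_le[OF j] by (intro mult_left_mono) auto
    finally show "?B\<^sup>2 * omega_mass N k j \<le> 1024 * (real N)\<^sup>2 * sigma_dot N M I" by simp
  qed
  finally show ?thesis .
qed

end

theorem mainTheorem6:
  fixes N :: nat and \<rho> :: real and K :: "real \<Rightarrow> real" and M :: "real measure"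
  assumes "N \<ge> 16" and "2/3 \<le> \<rho>" and "\<rho> < 1"
    and "flat_kernel N \<rho> K"
    and "redistributed_cantor_measure N M"
  shows "\<exists>C::real. \<forall>I::real set. is_interval I \<longrightarrow>
           (\<integral>\<^sup>+ x \<in> I. ennreal ((H_flat_I N K M I x)\<^sup>2) \<partial>M) \<le> ennreal (C * sigma_dot N M I)"
proof -
  interpret redistributed_cantor N M
    using assms(1,5) by unfold_locales auto
  show ?thesis
    using nn_integral_H_flat_I_sq_le[OF assms(4)] by blast
qed

end
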